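(* Let $\mathcal A$ be a linear time-invariant algorithm with state-space realization $(A,B,C,D)$. Then an algorithm $\mathcal B$ satisfies $\mathcal B=\mathcal A^2$ if and only if the transfer function of $\mathcal B$ is $$\begin{bmatrix} C(zI-A^2)^{-1}AB+D & C(zI-A^2)^{-1}B\\ CA(zI-A^2)^{-1}AB+CB & CA(zI-A^2)^{-1}B+D\end{bmatrix}.$$
   Context: A linear time-invariant algorithm $\mathcal A$ with state-space realization $(A,B,C,D)$ and oracle map $\phi$ generates $x^{k+1}=Ax^k+Bu^k$, $y^k=Cx^k+Du^k$, $u^k=\phi(y^k)$; it can be viewed as the map $x^k\mapsto x^{k+1}$. Its transfer function is $\hat H(z)=C(zI-A)^{-1}B+D$. The algorithm $\mathcal A^2$ (repetition) performs two iterations of $\mathcal A$ as a single iteration: its state is $x^{2k}$ of $\mathcal A$, its oracle outputs in one iteration are $(u^{2k},u^{2k+1})$ and its oracle arguments are $(y^{2k},y^{2k+1})$, in this order. *)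

theory Defs
  imports "Jordan_Normal_Form.Gauss_Jordan_Elimination" "Jordan_Normal_Form.Determinant"
begin

text \<open>A linear time-invariant algorithm given by a state-space realization (A,B,C,D):
  x(k+1) = A x(k) + B u(k),  y(k) = C x(k) + D u(k),  u(k) = phi(y(k)).
  Matrices are real; n = state dimension, m = oracle-output (input) dimension,
  p = oracle-argument (output) dimension.\<close>

type_synonym realization = "real mat \<times> real mat \<times> real mat \<times> real mat"

definition wf_real :: "realization \<Rightarrow> nat \<Rightarrow> nat \<Rightarrow> nat \<Rightarrow> bool" where
  "wf_real S n m p = (case S of (A, B, C, D) \<Rightarrow>
      A \<in> carrier_mat n n \<and> B \<in> carrier_mat n m \<and> C \<in> carrier_mat p n \<and> D \<in> carrier_mat p m)"

definition state_mat :: "realization \<Rightarrow> real mat" where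
  "state_mat S = fst S"

definition cm :: "real mat \<Rightarrow> complex mat" where
  "cm M = map_mat complex_of_real M"

text \<open>Inverse of a square complex matrix (meaningful when it is invertible).\<close>
definition minv :: "complex mat \<Rightarrow> complex mat" where
  "minv M = the (mat_inverse M)"

definition zIm :: "complex \<Rightarrow> real mat \<Rightarrow> complex mat" where
  "zIm z A = z \<cdot>\<^sub>m 1\<^sub>m (dim_row A) - cm A"

definition transfer :: "realization \<Rightarrow> complex \<Rightarrow> complex mat" where
  "transfer S z = (case S of (A, B, C, D) \<Rightarrow> cm C * minv (zIm z A) * cm B + cm D)"

text \<open>Two transfer functions (rational matrix functions) are equal iff they agree at every z
  at which both are defined.\<close>
definition same_transfer :: "realization \<Rightarrow> realization \<Rightarrow> bool" where
  "same_transfer S T = (\<forall>z. det (zIm z (state_mat S)) \<noteq> 0 \<longrightarrow> det (zIm z (state_mat T)) \<noteq> 0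
       \<longrightarrow> transfer S z = transfer T z)"

text \<open>R is a realization of the repetition A^2 of the algorithm with realization S=(A,B,C,D)
  (state dims n, input dim m, output dim p): R has state x(2k), input (u(2k),u(2k+1)),
  output (y(2k),y(2k+1)), and one iteration of R performs exactly two iterations of S.\<close>
definition is_repetition :: "realization \<Rightarrow> nat \<Rightarrow> nat \<Rightarrow> nat \<Rightarrow> realization \<Rightarrow> bool" where
  "is_repetition S n m p R = (case S of (A, B, C, D) \<Rightarrow> case R of (A2, B2, C2, D2) \<Rightarrow>
     wf_real R n (2*m) (2*p) \<and>
     (\<forall>x u0 u1. x \<in> carrier_vec n \<longrightarrow> u0 \<in> carrier_vec m \<longrightarrow> u1 \<in> carrier_vec m \<longrightarrow>
        (let x1 = A *\<^sub>v x + B *\<^sub>v u0;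
             x2 = A *\<^sub>v x1 + B *\<^sub>v u1;
             y0 = C *\<^sub>v x + D *\<^sub>v u0;
             y1 = C *\<^sub>v x1 + D *\<^sub>v u1
         in A2 *\<^sub>v x + B2 *\<^sub>v (u0 @\<^sub>v u1) = x2 \<and>
            C2 *\<^sub>v x + D2 *\<^sub>v (u0 @\<^sub>v u1) = y0 @\<^sub>v y1)))"

text \<open>LTI algorithms are identified when they have the same transfer function;
  "T = S^2" means T equals the repetition of S in this sense.\<close>
definition eq_repetition :: "realization \<Rightarrow> realization \<Rightarrow> nat \<Rightarrow> nat \<Rightarrow> nat \<Rightarrow> bool" where
  "eq_repetition T S n m p = (\<exists>R. is_repetition S n m p R \<and> same_transfer T R)"

end

theory Submission
  imports Defs
begin

(* One iteration of A^2 sends (x, u0, u1) to x2 = A^2 x + A B u0 + B u1 and outputs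
   y0 = C x + D u0, y1 = C A x + C B u0 + D u1; these formulas are linear in (x, u0, u1),
   so they define a realization of A^2, and it is the only one because a realization is
   determined by its (linear) one-step map. Evaluating C2 (zI - A2)^-1 B2 + D2 for it
   blockwise gives the stated transfer function. *)

lemma mult_mat_vec_zero:
  fixes X :: "'a :: semiring_0 mat"
  assumes "X \<in> carrier_mat nr nc"
  shows "X *\<^sub>v 0\<^sub>v nc = 0\<^sub>v nr"
  using assms by (intro eq_vecI) (auto simp: scalar_prod_def)

lemma zero_mat_mult_vec:
  "v \<in> carrier_vec nc \<Longrightarrow> (0\<^sub>m nr nc :: 'a :: semiring_0 mat) *\<^sub>v v = 0\<^sub>v nr"
  by (intro eq_vecI) (auto simp: scalar_prod_def)

lemma eq_mat_mult_vecI: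
  fixes X Y :: "'a :: semiring_1 mat"
  assumes "X \<in> carrier_mat nr nc" "Y \<in> carrier_mat nr nc"
    and "\<And>v. v \<in> carrier_vec nc \<Longrightarrow> X *\<^sub>v v = Y *\<^sub>v v"
  shows "X = Y"
proof (rule eq_matI)
  fix i j assume "i < dim_row Y" "j < dim_col Y"
  then have "X $$ (i, j) = (X *\<^sub>v unit_vec nc j) $ i" "Y $$ (i, j) = (Y *\<^sub>v unit_vec nc j) $ i"
    using assms(1,2) by auto
  then show "X $$ (i, j) = Y $$ (i, j)" using assms(3)[of "unit_vec nc j"] by simp
qed (use assms in auto)

lemma mult_mat_vec_add_eqD:
  fixes X X' Y Y' :: "'a :: semiring_1 mat"
  assumes X: "X \<in> carrier_mat nr nc" "X' \<in> carrier_mat nr nc"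
    and Y: "Y \<in> carrier_mat nr nc'" "Y' \<in> carrier_mat nr nc'"
    and eq: "\<And>x v. x \<in> carrier_vec nc \<Longrightarrow> v \<in> carrier_vec nc' \<Longrightarrow>
      X *\<^sub>v x + Y *\<^sub>v v = X' *\<^sub>v x + Y' *\<^sub>v v"
  shows "X = X'" "Y = Y'"
proof -
  show "X = X'"
  proof (rule eq_mat_mult_vecI[OF X])
    fix x :: "'a vec" assume "x \<in> carrier_vec nc"
    with eq[of x "0\<^sub>v nc'"] show "X *\<^sub>v x = X' *\<^sub>v x"
      using X Y by (simp add: mult_mat_vec_zero)
  qed
  show "Y = Y'"
  proof (rule eq_mat_mult_vecI[OF Y])
    fix v :: "'a vec" assume "v \<in> carrier_vec nc'"
    with eq[of "0\<^sub>v nc" v] show "Y *\<^sub>v v = Y' *\<^sub>v v"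
      using X Y by (simp add: mult_mat_vec_zero)
  qed
qed

definition append_cols :: "'a :: zero mat \<Rightarrow> 'a mat \<Rightarrow> 'a mat" where
  "append_cols P Q = four_block_mat P Q (0\<^sub>m 0 (dim_col P)) (0\<^sub>m 0 (dim_col Q))"

lemma carrier_append_cols:
  "P \<in> carrier_mat nr nc \<Longrightarrow> Q \<in> carrier_mat nr nc' \<Longrightarrow>
    append_cols P Q \<in> carrier_mat nr (nc + nc')"
  unfolding append_cols_def by auto

lemma append_cols_mult_vec:
  fixes P Q :: "'a :: semiring_0 mat"
  assumes "P \<in> carrier_mat nr nc" "Q \<in> carrier_mat nr nc'"
    and "u \<in> carrier_vec nc" "v \<in> carrier_vec nc'"
  shows "append_cols P Q *\<^sub>v (u @\<^sub>v v) = P *\<^sub>v u + Q *\<^sub>v v"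
  using assms
  by (intro eq_vecI) (auto simp: append_cols_def four_block_mat_mult_vec[of P nr nc Q nc' _ 0])

lemma append_rows_mult:
  fixes X Y M :: "'a :: semiring_0 mat"
  assumes "X \<in> carrier_mat nr1 n" "Y \<in> carrier_mat nr2 n" "M \<in> carrier_mat n nc"
  shows "(X @\<^sub>r Y) * M = (X * M) @\<^sub>r (Y * M)"
  using assms by (intro eq_matI) (auto simp: append_rows_def scalar_prod_def intro!: sum.cong)

lemma append_rows_mult_append_cols:
  fixes X Y P Q :: "'a :: semiring_0 mat"
  assumes "X \<in> carrier_mat nr1 n" "Y \<in> carrier_mat nr2 n"
    and "P \<in> carrier_mat n nc" "Q \<in> carrier_mat n nc'"
  shows "(X @\<^sub>r Y) * append_cols P Q = four_block_mat (X * P) (X * Q) (Y * P) (Y * Q)"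
  unfolding append_rows_def append_cols_def
  using assms by (subst mult_four_block_mat[of _ nr1 n _ 0 _ nr2]) auto

lemma map_mat_append_rows:
  assumes "X \<in> carrier_mat nr1 nc" "Y \<in> carrier_mat nr2 nc"
  shows "map_mat f (X @\<^sub>r Y) = map_mat f X @\<^sub>r map_mat f Y"
  using assms by (intro eq_matI) (auto simp: append_rows_def)

lemma map_mat_append_cols:
  assumes "P \<in> carrier_mat nr nc" "Q \<in> carrier_mat nr nc'"
  shows "map_mat f (append_cols P Q) = append_cols (map_mat f P) (map_mat f Q)"
  using assms by (intro eq_matI) (auto simp: append_cols_def)

lemma map_mat_zero_mat: "f 0 = 0 \<Longrightarrow> map_mat f (0\<^sub>m nr nc) = 0\<^sub>m nr nc"
  by (intro eq_matI) auto

lemma minv_carrier: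
  assumes "M \<in> carrier_mat n n" and "det M \<noteq> 0"
  shows "minv M \<in> carrier_mat n n"
proof -
  have "M \<in> Units (ring_mat TYPE(complex) n undefined)"
    using det_non_zero_imp_unit[OF assms] .
  then obtain N where "mat_inverse M = Some N"
    using mat_inverse(1)[OF assms(1), of undefined] by (cases "mat_inverse M") auto
  then show ?thesis
    unfolding minv_def using mat_inverse(2)[OF assms(1)] by simp
qed

definition repetition_realization :: "realization \<Rightarrow> realization" where
  "repetition_realization S = (case S of (A, B, C, D) \<Rightarrow>
     (A * A, append_cols (A * B) B, C @\<^sub>r (C * A),
      four_block_mat D (0\<^sub>m (dim_row D) (dim_col D)) (C * B) D))"

lemma is_repetition_repetition_realization:
  assumes "wf_real (A, B, C, D) n m p"
  shows "is_repetition (A, B, C, D) n m p (repetition_realization (A, B, C, D))"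
proof -
  have c: "A \<in> carrier_mat n n" "B \<in> carrier_mat n m" "C \<in> carrier_mat p n" "D \<in> carrier_mat p m"
    using assms unfolding wf_real_def by auto
  have state: "A * A *\<^sub>v x + append_cols (A * B) B *\<^sub>v (u0 @\<^sub>v u1) =
      A *\<^sub>v (A *\<^sub>v x + B *\<^sub>v u0) + B *\<^sub>v u1"
    and outputs: "(C @\<^sub>r C * A) *\<^sub>v x + four_block_mat D (0\<^sub>m p m) (C * B) D *\<^sub>v (u0 @\<^sub>v u1) =
       (C *\<^sub>v x + D *\<^sub>v u0) @\<^sub>v (C *\<^sub>v (A *\<^sub>v x + B *\<^sub>v u0) + D *\<^sub>v u1)"
    if "x \<in> carrier_vec n" "u0 \<in> carrier_vec m" "u1 \<in> carrier_vec m" for x u0 u1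
    using c that
    by (simp_all add: append_cols_mult_vec[where nr = n and nc = m and nc' = m]
        mat_mult_append[where ?nr1.0 = p and ?nr2.0 = p and nc = n]
        four_block_mat_mult_vec[where ?nr1.0 = p and ?nr2.0 = p and ?nc1.0 = m and ?nc2.0 = m]
        zero_mat_mult_vec mult_add_distrib_mat_vec[where nc = n] append_vec_add[where n = p and m = p]
        assoc_add_vec[where n = n] assoc_add_vec[where n = p])
  have "append_cols (A * B) B \<in> carrier_mat n (2 * m)" "C @\<^sub>r C * A \<in> carrier_mat (2 * p) n"
    "four_block_mat D (0\<^sub>m p m) (C * B) D \<in> carrier_mat (2 * p) (2 * m)"
    using c by (auto simp: mult_2 intro!: carrier_append_cols)
  with c state outputs show ?thesis
    unfolding is_repetition_def repetition_realization_def wf_real_def by auto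
qed

lemma is_repetition_unique:
  assumes "is_repetition S n m p R" and "is_repetition S n m p R'"
  shows "R = R'"
proof -
  obtain A B C D where S: "S = (A, B, C, D)" by (cases S)
  obtain A2 B2 C2 D2 where R: "R = (A2, B2, C2, D2)" by (cases R)
  obtain A2' B2' C2' D2' where R': "R' = (A2', B2', C2', D2')" by (cases R')
  have c: "A2 \<in> carrier_mat n n" "B2 \<in> carrier_mat n (2 * m)"
    "C2 \<in> carrier_mat (2 * p) n" "D2 \<in> carrier_mat (2 * p) (2 * m)"
    "A2' \<in> carrier_mat n n" "B2' \<in> carrier_mat n (2 * m)"
    "C2' \<in> carrier_mat (2 * p) n" "D2' \<in> carrier_mat (2 * p) (2 * m)"
    using assms unfolding S R R' is_repetition_def wf_real_def by auto
  have "A2 *\<^sub>v x + B2 *\<^sub>v u = A2' *\<^sub>v x + B2' *\<^sub>v u \<and>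
      C2 *\<^sub>v x + D2 *\<^sub>v u = C2' *\<^sub>v x + D2' *\<^sub>v u"
    if x: "x \<in> carrier_vec n" and u: "u \<in> carrier_vec (2 * m)" for x u
  proof -
    have "u = vec_first u m @\<^sub>v vec_last u m"
      using u by (simp add: mult_2)
    with assms x show ?thesis
      unfolding S R R' is_repetition_def Let_def prod.case
      by (metis vec_first_carrier vec_last_carrier)
  qed
  then have "A2 = A2'" "B2 = B2'" "C2 = C2'" "D2 = D2'"
    using mult_mat_vec_add_eqD[OF c(1,5,2,6)] mult_mat_vec_add_eqD[OF c(3,7,4,8)] by blast+
  then show ?thesis unfolding R R' by simp
qed

lemma eq_repetition_iff_same_transfer:
  assumes "wf_real (A, B, C, D) n m p"
  shows "eq_repetition T (A, B, C, D) n m p \<longleftrightarrow>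
    same_transfer T (repetition_realization (A, B, C, D))"
  using is_repetition_repetition_realization[OF assms] is_repetition_unique
  unfolding eq_repetition_def by blast

lemma transfer_repetition_realization:
  assumes "wf_real (A, B, C, D) n m p" and "det (zIm z (A * A)) \<noteq> 0"
  shows "transfer (repetition_realization (A, B, C, D)) z =
    four_block_mat
      (cm C * minv (zIm z (A * A)) * cm (A * B) + cm D)
      (cm C * minv (zIm z (A * A)) * cm B)
      (cm (C * A) * minv (zIm z (A * A)) * cm (A * B) + cm (C * B))
      (cm (C * A) * minv (zIm z (A * A)) * cm B + cm D)"
    (is "_ = ?rhs")
proof -
  let ?M = "minv (zIm z (A * A))"
  have c: "A \<in> carrier_mat n n" "B \<in> carrier_mat n m" "C \<in> carrier_mat p n" "D \<in> carrier_mat p m"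
    using assms(1) unfolding wf_real_def by auto
  then have cm: "cm C \<in> carrier_mat p n" "cm (C * A) \<in> carrier_mat p n"
    "cm (A * B) \<in> carrier_mat n m" "cm B \<in> carrier_mat n m"
    "cm D \<in> carrier_mat p m" "cm (C * B) \<in> carrier_mat p m"
    by (auto simp: cm_def)
  have M: "?M \<in> carrier_mat n n"
    using c assms(2) by (intro minv_carrier) (auto simp: zIm_def cm_def)
  have "transfer (repetition_realization (A, B, C, D)) z =
      (cm C @\<^sub>r cm (C * A)) * ?M * append_cols (cm (A * B)) (cm B)
      + four_block_mat (cm D) (0\<^sub>m p m) (cm (C * B)) (cm D)"
    using c unfolding transfer_def repetition_realization_def cm_def
    by (simp add: map_mat_append_rows[where ?nr1.0 = p and ?nr2.0 = p and nc = n]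
        map_mat_append_cols[where nr = n and nc = m and nc' = m]
        map_four_block_mat[where ?nr1.0 = p and ?nc1.0 = m and ?nr2.0 = p and ?nc2.0 = m]
        map_mat_zero_mat)
  also have "\<dots> = four_block_mat (cm C * ?M * cm (A * B)) (cm C * ?M * cm B)
        (cm (C * A) * ?M * cm (A * B)) (cm (C * A) * ?M * cm B)
      + four_block_mat (cm D) (0\<^sub>m p m) (cm (C * B)) (cm D)"
    by (simp only: append_rows_mult[OF cm(1,2) M]
        append_rows_mult_append_cols[OF mult_carrier_mat[OF cm(1) M] mult_carrier_mat[OF cm(2) M]
          cm(3,4)])
  also have "\<dots> = ?rhs"
    using cm M
    by (subst add_four_block_mat[where ?nr1.0 = p and ?nc1.0 = m and ?nr2.0 = p and ?nc2.0 = m]) auto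
  finally show ?thesis .
qed

theorem proposition7p1:
  fixes A B C D :: "real mat" and T :: realization and n m p n' :: nat
  assumes "wf_real (A, B, C, D) n m p"
    and "wf_real T n' (2*m) (2*p)"
  shows "eq_repetition T (A, B, C, D) n m p \<longleftrightarrow>
    (\<forall>z. det (zIm z (state_mat T)) \<noteq> 0 \<longrightarrow> det (zIm z (A * A)) \<noteq> 0 \<longrightarrow>
       transfer T z =
         four_block_mat
           (cm C * minv (zIm z (A * A)) * cm (A * B) + cm D)
           (cm C * minv (zIm z (A * A)) * cm B)
           (cm (C * A) * minv (zIm z (A * A)) * cm (A * B) + cm (C * B))
           (cm (C * A) * minv (zIm z (A * A)) * cm B + cm D))"
proof -
  have "state_mat (repetition_realization (A, B, C, D)) = A * A"
    by (simp add: state_mat_def repetition_realization_def)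
  then show ?thesis
    unfolding eq_repetition_iff_same_transfer[OF assms(1)] same_transfer_def
    using transfer_repetition_realization[OF assms(1)] by auto
qed

end
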